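(* Let $\mathcal{R}=\{f_1,\dots,f_m\}$ be the set of area inequalities of a Lagrangian diagram with crossings $q_1,\dots,q_n$, each $f_i$ of the form $\sum_{j=1}^n\alpha_{i,j}h(q_j)>0$ with $\alpha_{i,j}\in\{-2,-1,0,1,2\}$. Suppose the flooding algorithm succeeds, producing tiers $T_1,\dots,T_M$. Define integers $h_M=1$ and $h_k=1+\sum_{i=k+1}^M 2h_i|T_i|$ for $k=M-1,\dots,1$. Then assigning height $h(q)=h_k$ to each crossing $q\in T_k$, for $1\le k\le M$, gives a valid height assignment for the Lagrangian diagram, i.e. all inequalities in $\mathcal{R}$ are satisfied.
   Context: For a Lagrangian diagram (knot diagram planar isotopic to the Lagrangian projection $(x,y,z)\mapsto(x,y)$ of a Legendrian knot in $(\mathbb{R}^3, dz-y\,dx)$), an area patch is a bounded component of the complement of the diagram. Traversing the boundary of a patch $P$ with the boundary orientation, a corner where one passes from an understrand to an overstrand gets positive Reeb sign, other corners negative Reeb sign. The area inequality of $P$ is: the sum over corners of $P$ of (Reeb sign)$\cdot h(\text{crossing})$ is $>0$ (a crossing may appear with multiplicity, hence coefficients in $\{-2,\dots,2\}$); these form $\mathcal{R}$. Flooding algorithm: start with $\mathcal{R}'=\mathcal{R}$ and $k=1$. (i) Let $T_k=\{q_j:\alpha_{i,j}\ge0$ for every $f_i\in\mathcal{R}'\}$ among crossings not yet assigned to a tier. (ii) If $T_k=\emptyset$ the algorithm fails; otherwise, for each $q_j\in T_k$ remove from $\mathcal{R}'$ every $f_i$ with $\alpha_{i,j}>0$. (iii)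 If $\mathcal{R}'\ne\emptyset$, increase $k$ by one and return to (i); if $\mathcal{R}'=\emptyset$, let $T_{k+1}$ be the set of crossings in no earlier tier and $M=k+1$; the algorithm succeeds. The tiers partition $\{q_1,\dots,q_n\}$, and $|T_i|$ denotes the cardinality of $T_i$. *)

theory Defs
  imports Main
begin

text \<open>Area inequalities are given by a coefficient matrix alpha: inequality i (i < m)
  reads  sum over j < n of alpha i j * h(q_j) > 0.  Crossings are indexed by j < n,
  inequalities by i < m.\<close>

definition flood_tier :: "(nat \<Rightarrow> nat \<Rightarrow> int) \<Rightarrow> nat \<Rightarrow> nat set \<Rightarrow> nat set \<Rightarrow> nat set" where
  "flood_tier \<alpha> n Rr A = {j. j < n \<and> j \<notin> A \<and> (\<forall>i\<in>Rr. 0 \<le> \<alpha> i j)}"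

definition flood_remove :: "(nat \<Rightarrow> nat \<Rightarrow> int) \<Rightarrow> nat set \<Rightarrow> nat set \<Rightarrow> nat set" where
  "flood_remove \<alpha> Rr T = Rr - {i. \<exists>j\<in>T. 0 < \<alpha> i j}"

inductive flood_run :: "(nat \<Rightarrow> nat \<Rightarrow> int) \<Rightarrow> nat \<Rightarrow> nat set \<Rightarrow> nat set \<Rightarrow> nat set list \<Rightarrow> bool"
  for \<alpha> :: "nat \<Rightarrow> nat \<Rightarrow> int" and n :: nat where
  finish: "\<lbrakk> flood_tier \<alpha> n Rr A \<noteq> {};
             flood_remove \<alpha> Rr (flood_tier \<alpha> n Rr A) = {} \<rbrakk>
           \<Longrightarrow> flood_run \<alpha> n Rr A
                 [flood_tier \<alpha> n Rr A, {j. j < n \<and> j \<notin> A \<union> flood_tier \<alpha> n Rr A}]"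
| step: "\<lbrakk> flood_tier \<alpha> n Rr A \<noteq> {};
           flood_remove \<alpha> Rr (flood_tier \<alpha> n Rr A) \<noteq> {};
           flood_run \<alpha> n (flood_remove \<alpha> Rr (flood_tier \<alpha> n Rr A)) (A \<union> flood_tier \<alpha> n Rr A) Ts \<rbrakk>
         \<Longrightarrow> flood_run \<alpha> n Rr A (flood_tier \<alpha> n Rr A # Ts)"

text \<open>The flooding algorithm for m inequalities and n crossings succeeds with tiers Ts
  (Ts ! k is the paper's T_(k+1); length Ts is the paper's M).\<close>
definition flooding_succeeds :: "(nat \<Rightarrow> nat \<Rightarrow> int) \<Rightarrow> nat \<Rightarrow> nat \<Rightarrow> nat set list \<Rightarrow> bool" where
  "flooding_succeeds \<alpha> m n Ts \<longleftrightarrow> flood_run \<alpha> n {..<m} {} Ts"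

text \<open>Tier heights (0-based index k, paper's h_(k+1)):
  last tier gets 1, and h_k = 1 + sum_{i>k} 2 h_i |T_i|.\<close>
function tier_height :: "nat set list \<Rightarrow> nat \<Rightarrow> int" where
  "tier_height Ts k =
     (if length Ts \<le> Suc k then 1
      else 1 + (\<Sum>i\<in>{Suc k..<length Ts}. 2 * tier_height Ts i * int (card (Ts ! i))))"
  by auto
termination
  by (relation "measure (\<lambda>(Ts, k). length Ts - k)") auto

end

theory Submission
  imports Defs
begin

text \<open>Fix an area inequality and let T_k be the tier whose flooding step removes it. Its
  coefficients on T_1, ..., T_k are nonnegative and one coefficient on T_k is positive, so these
  tiers contribute at least h_k. Every coefficient is at least -2, so the later tiers contribute
  at least -(sum over l > k of 2 h_l |T_l|) = 1 - h_k, and the total is at least 1.\<close>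

lemma tier_height_ge_1: "1 \<le> tier_height Ts k"
proof (induction Ts k rule: tier_height.induct)
  case (1 Ts k)
  then have "0 \<le> (\<Sum>i\<in>{Suc k..<length Ts}. 2 * tier_height Ts i * int (card (Ts ! i)))"
    if "\<not> length Ts \<le> Suc k"
    using that
    by (intro sum_nonneg) (simp add: order.trans[OF zero_le_one] del: tier_height.simps)
  then show ?case
    by (subst tier_height.simps) auto
qed

lemma tier_height_eq:
  "Suc k < length Ts \<Longrightarrow>
    tier_height Ts k = 1 + (\<Sum>i\<in>{Suc k..<length Ts}. 2 * tier_height Ts i * int (card (Ts ! i)))"
  by (subst tier_height.simps) simp

declare tier_height.simps [simp del]

lemma tier_height_weighted_sum_pos:
  fixes c :: "nat \<Rightarrow> int"
  assumes k: "Suc k < length Ts"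
    and nonneg: "\<And>l. l \<le> k \<Longrightarrow> 0 \<le> c l"
    and pos: "1 \<le> c k"
    and lower: "\<And>l. l < length Ts \<Longrightarrow> - 2 * int (card (Ts ! l)) \<le> c l"
  shows "0 < (\<Sum>l<length Ts. tier_height Ts l * c l)"
proof -
  let ?H = "tier_height Ts"
  have H_nonneg: "0 \<le> ?H l" for l
    using tier_height_ge_1[of Ts l] by simp
  have "?H k \<le> ?H k * c k"
    using pos tier_height_ge_1[of Ts k] by simp
  also have "\<dots> \<le> (\<Sum>l<Suc k. ?H l * c l)"
    using nonneg H_nonneg by (intro member_le_sum) auto
  finally have low: "?H k \<le> (\<Sum>l<Suc k. ?H l * c l)" .
  have "1 - ?H k = (\<Sum>l\<in>{Suc k..<length Ts}. ?H l * (- 2 * int (card (Ts ! l))))"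
    using tier_height_eq[OF k] by (simp add: sum_negf algebra_simps)
  also have "\<dots> \<le> (\<Sum>l\<in>{Suc k..<length Ts}. ?H l * c l)"
    using lower H_nonneg by (intro sum_mono mult_left_mono) auto
  finally have high: "1 - ?H k \<le> (\<Sum>l\<in>{Suc k..<length Ts}. ?H l * c l)" .
  have "(\<Sum>l<length Ts. ?H l * c l)
      = (\<Sum>l<Suc k. ?H l * c l) + (\<Sum>l\<in>{Suc k..<length Ts}. ?H l * c l)"
    unfolding atLeast0LessThan[symmetric] using k
    by (intro sum.atLeastLessThan_concat[symmetric]) auto
  with low high show ?thesis
    by linarith
qed

lemma tier_height_coefficient_sum_pos:
  fixes a :: "nat \<Rightarrow> int"
  assumes finite: "\<And>l. l < length Ts \<Longrightarrow> finite (Ts ! l)"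
    and k: "Suc k < length Ts"
    and pos: "\<exists>j\<in>Ts ! k. 0 < a j"
    and nonneg: "\<forall>l\<le>k. \<forall>j\<in>Ts ! l. 0 \<le> a j"
    and lower: "\<forall>l<length Ts. \<forall>j\<in>Ts ! l. - 2 \<le> a j"
  shows "0 < (\<Sum>l<length Ts. tier_height Ts l * sum a (Ts ! l))"
proof (rule tier_height_weighted_sum_pos[OF k])
  show "0 \<le> sum a (Ts ! l)" if "l \<le> k" for l
    using nonneg that by (simp add: sum_nonneg)
  obtain j where "j \<in> Ts ! k" "0 < a j"
    using pos by blast
  then have "0 < sum a (Ts ! k)"
    using nonneg finite[OF Suc_lessD[OF k]] by (intro sum_pos2) auto
  then show "1 \<le> sum a (Ts ! k)"
    by simp
  show "- 2 * int (card (Ts ! l)) \<le> sum a (Ts ! l)" if "l < length Ts" for l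
    using sum_bounded_below[of "Ts ! l" "- 2" a] lower that by simp
qed

lemma flood_run_nonempty: "flood_run \<alpha> n Rr A Ts \<Longrightarrow> Ts \<noteq> []"
  by (cases rule: flood_run.cases) auto

lemma flood_run_Union: "flood_run \<alpha> n Rr A Ts \<Longrightarrow> \<Union>(set Ts) = {..<n} - A"
  by (induction rule: flood_run.induct) (auto simp: flood_tier_def)

lemma flood_run_disjoint:
  assumes "flood_run \<alpha> n Rr A Ts" "a < length Ts" "b < length Ts" "a \<noteq> b"
  shows "Ts ! a \<inter> Ts ! b = {}"
  using assms
proof (induction arbitrary: a b rule: flood_run.induct)
  case (finish Rr A)
  then show ?case
    by (auto simp: less_Suc_eq numeral_2_eq_2)
next
  case (step Rr A Ts)
  let ?T = "flood_tier \<alpha> n Rr A"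
  have "?T \<inter> X = {}" if "X \<in> set Ts" for X
    using flood_run_Union[OF step.hyps(3)] that by blast
  with step show ?case
    by (cases a; cases b) (auto simp: Int_commute)
qed

lemma flood_run_sum_tiers:
  assumes "flood_run \<alpha> n Rr A Ts"
  shows "sum f ({..<n} - A) = (\<Sum>l<length Ts. sum f (Ts ! l))"
proof -
  have "set Ts = (!) Ts ` {..<length Ts}"
    by (metis atLeast0LessThan map_nth set_map set_upt)
  then have tiers: "{..<n} - A = (\<Union>l<length Ts. Ts ! l)"
    using flood_run_Union[OF assms] by simp
  moreover have "finite (Ts ! l)" if "l < length Ts" for l
    using tiers that by (metis UN_upper finite_Diff finite_lessThan finite_subset lessThan_iff)
  ultimately show ?thesis
    using flood_run_disjoint[OF assms] by (simp add: sum.UNION_disjoint)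
qed

lemma flood_run_removing_tier:
  assumes "flood_run \<alpha> n Rr A Ts" "i \<in> Rr"
  shows "\<exists>k. Suc k < length Ts \<and> (\<exists>j\<in>Ts ! k. 0 < \<alpha> i j)
    \<and> (\<forall>l\<le>k. \<forall>j\<in>Ts ! l. 0 \<le> \<alpha> i j)"
  using assms
proof (induction rule: flood_run.induct)
  case (finish Rr A)
  then show ?case
    by (intro exI[of _ 0]) (auto simp: flood_tier_def flood_remove_def)
next
  case (step Rr A Ts)
  let ?T = "flood_tier \<alpha> n Rr A"
  have T_nonneg: "\<forall>j\<in>?T. 0 \<le> \<alpha> i j"
    using step.prems by (simp add: flood_tier_def)
  show ?case
  proof (cases "i \<in> flood_remove \<alpha> Rr ?T")
    case True
    then obtain k where k: "Suc k < length Ts" "\<exists>j\<in>Ts ! k. 0 < \<alpha> i j"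
      and nonneg: "\<forall>l\<le>k. \<forall>j\<in>Ts ! l. 0 \<le> \<alpha> i j"
      using step.IH by blast
    have "0 \<le> \<alpha> i j" if "l \<le> Suc k" "j \<in> (?T # Ts) ! l" for l j
      using that T_nonneg nonneg by (cases l) auto
    with k show ?thesis
      by (intro exI[of _ "Suc k"]) auto
  next
    case False
    with step.prems have "\<exists>j\<in>?T. 0 < \<alpha> i j"
      by (simp add: flood_remove_def)
    with T_nonneg flood_run_nonempty[OF step.hyps(3)] show ?thesis
      by (intro exI[of _ 0]) auto
  qed
qed

theorem proposition5p1:
  fixes \<alpha> :: "nat \<Rightarrow> nat \<Rightarrow> int" and m n :: nat and Ts :: "nat set list"
    and h :: "nat \<Rightarrow> int"
  assumes coeffs: "\<forall>i<m. \<forall>j<n. \<alpha> i j \<in> {-2..2}"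
    and succ: "flooding_succeeds \<alpha> m n Ts"
    and heights: "\<forall>k<length Ts. \<forall>j\<in>Ts ! k. h j = tier_height Ts k"
  shows "\<forall>i<m. (\<Sum>j<n. \<alpha> i j * h j) > 0"
proof (intro allI impI)
  fix i assume "i < m"
  have run: "flood_run \<alpha> n {..<m} {} Ts"
    using succ by (simp add: flooding_succeeds_def)
  obtain k where k: "Suc k < length Ts" "\<exists>j\<in>Ts ! k. 0 < \<alpha> i j"
    "\<forall>l\<le>k. \<forall>j\<in>Ts ! l. 0 \<le> \<alpha> i j"
    using flood_run_removing_tier[OF run] \<open>i < m\<close> by blast
  have tier: "Ts ! l \<subseteq> {..<n}" if "l < length Ts" for l
    using flood_run_Union[OF run] nth_mem[OF that] by blast
  have "(\<Sum>j<n. \<alpha> i j * h j) = (\<Sum>l<length Ts. \<Sum>j\<in>Ts ! l. \<alpha> i j * h j)"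
    using flood_run_sum_tiers[OF run, of "\<lambda>j. \<alpha> i j * h j"] by simp
  also have "\<dots> = (\<Sum>l<length Ts. tier_height Ts l * sum (\<alpha> i) (Ts ! l))"
    using heights by (auto simp: sum_distrib_left mult.commute intro!: sum.cong)
  also have "0 < \<dots>"
    using tier coeffs \<open>i < m\<close> k
    by (intro tier_height_coefficient_sum_pos) (auto intro: finite_subset)
  finally show "(\<Sum>j<n. \<alpha> i j * h j) > 0" .
qed

end
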